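(* Let $\mathcal{P}^d=(\mathcal{D},\varphi,\mathcal{E})$ be a trembling-hand (TH) problem for $\mathrm{LTL}_f$ planning in a deterministic domain $\mathcal{D}=(S,s_0,A,F_d,L)$, and let $\mathcal{M}=(S,s_0,A,\mathcal{T},L)$ be the MDP constructed from it (see context). Then a strategy is optimal for $\mathcal{M}$ with objective $\varphi$ if and only if it is optimal for $\mathcal{P}^d$; that is, $$\sigma_p^*=\arg\max_{\sigma_m}\ \Pr_{\mathcal{M}}^{\sigma_m}(\varphi),\qquad\text{where }\ \sigma_p^*=\arg\max_{\sigma_p}\ \Pr_{\mathcal{D}}^{\sigma_p,\mathcal{E}}(\varphi).$$
   Context: $\mathrm{LTL}_f$ is linear temporal logic interpreted over finite nonempty traces over a finite set $Prop$ of atomic propositions; $\pi\models\varphi$ denotes that a finite trace $\pi\in(2^{Prop})^+$ satisfies $\varphi$. A deterministic domain is $\mathcal{D}=(S,s_0,A,F_d,L)$ with $S$ a finite set of states, $s_0\in S$ initial, $A$ a finite set of actions, $A(s)\subseteq A$ the (nonempty) set of actions applicable at $s$, $F_d:S\times A\to S$ giving the successor $F_d(s,a)$ for $a\in A(s)$, and $L:S\to 2^{Prop}$ a labelling. A finite path is an alternating sequence $s_0a_0s_1\cdots s_k$ of states and actions starting at $s_0$ with $a_i\in A(s_i)$; its induced trace is $L(s_0)\cdots L(s_k)$. An agent strategy is a function $\sigma$ from finite paths to actions with $\sigma(\rho)$ applicable at the last state of $\rho$. Action-instruction errors: $\mathcal{E}=\{err(s,a)\}$, where for each $s\in S$ and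 $a\in A(s)$, $err(s,a)$ is a probability distribution over $A(s)$; $err(s,a)(a')$ is the probability that the agent actually instructs $a'$ when it intends $a$ at $s$; $supp(s,a)$ is its support. Perturbed paths: given a strategy $\sigma_p$, a perturbed path is a sequence of triples $(s_0,a_0,a_0')(s_1,a_1,a_1')\cdots$ where $a_i=\sigma_p(s_0a_0s_1\cdots a_{i-1}s_i)$ is the intended action, $a_i'\in supp(s_i,a_i)$ is the actually instructed action, and $s_{i+1}=F_d(s_i,a_i')$. The probability measure on perturbed paths is the one in which, at each step, $a_i'$ is drawn according to $err(s_i,a_i)$ independently given the history. $\Pr_{\mathcal{D}}^{\sigma_p,\mathcal{E}}(\varphi)$ is the probability of the set of perturbed paths having some $k\ge 0$ with $L(s_0)\cdots L(s_k)\models\varphi$. The TH problem $\mathcal{P}^d$ asks for a strategy maximizing this probability (an optimal strategy for $\mathcal{P}^d$). MDP: $\mathcal{M}=(S,s_0,A,\mathcal{T},L)$ with $\mathcal{T}:S\times A\times S\to[0,1]$, $\mathcal{T}(s,a,\cdot)$ a distribution for $a\in A(s)$; a deterministic (history-dependent) strategy $\sigma_m$ maps finite paths $s_0a_0\cdots s_k$ to actions in $A(s_k)$ and induces the standard probability measure on infinite paths; $\Pr_{\mathcal{M}}^{\sigma_m}(\varphi)$ is the probability of the set of paths $s_0a_0s_1\cdots$ having some $k\ge0$ with $L(s_0)\cdots L(s_k)\models\varphi$. Constructed MDP: $S,s_0,A,L$ (and applicability) as in $\mathcal{D}$, and for $s\in S$, $a\in A(s)$, $s'\in S$: $\mathcal{T}(s,a,s')=\sum_{a'\in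 A(s):\,F_d(s,a')=s'} err(s,a)(a')$ (so $\mathcal{T}(s,a,s')=0$ if no applicable $a'$ leads to $s'$). *)

theory Defs
  imports "HOL-Probability.Probability_Mass_Function"
begin

datatype 'p ltlf =
    LTrue
  | Atom 'p
  | Neg "'p ltlf"
  | Conj "'p ltlf" "'p ltlf"
  | Next "'p ltlf"
  | Until "'p ltlf" "'p ltlf"

fun atoms :: "'p ltlf \<Rightarrow> 'p set" where
  "atoms LTrue = {}"
| "atoms (Atom p) = {p}"
| "atoms (Neg f) = atoms f"
| "atoms (Conj f g) = atoms f \<union> atoms g"
| "atoms (Next f) = atoms f"
| "atoms (Until f g) = atoms f \<union> atoms g"

fun sat_at :: "'p set list \<Rightarrow> nat \<Rightarrow> 'p ltlf \<Rightarrow> bool" where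
  "sat_at \<pi> i LTrue = True"
| "sat_at \<pi> i (Atom p) = (p \<in> \<pi> ! i)"
| "sat_at \<pi> i (Neg f) = (\<not> sat_at \<pi> i f)"
| "sat_at \<pi> i (Conj f g) = (sat_at \<pi> i f \<and> sat_at \<pi> i g)"
| "sat_at \<pi> i (Next f) = (i + 1 < length \<pi> \<and> sat_at \<pi> (i + 1) f)"
| "sat_at \<pi> i (Until f g) =
     (\<exists>j. i \<le> j \<and> j < length \<pi> \<and> sat_at \<pi> j g \<and> (\<forall>k. i \<le> k \<and> k < j \<longrightarrow> sat_at \<pi> k f))"

definition models :: "'p set list \<Rightarrow> 'p ltlf \<Rightarrow> bool" where
  "models \<pi> \<phi> \<longleftrightarrow> \<pi> \<noteq> [] \<and> sat_at \<pi> 0 \<phi>"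

text \<open>Domain (S, s0, A, F_d, L) with applicability Av, propositions Prop,
  errors err s a :: distribution over actions.\<close>
definition th_problem ::
  "'s set \<Rightarrow> 's \<Rightarrow> 'a set \<Rightarrow> ('s \<Rightarrow> 'a set) \<Rightarrow> ('s \<Rightarrow> 'a \<Rightarrow> 's) \<Rightarrow> ('s \<Rightarrow> 'p set)
   \<Rightarrow> 'p set \<Rightarrow> 'p ltlf \<Rightarrow> ('s \<Rightarrow> 'a \<Rightarrow> 'a pmf) \<Rightarrow> bool" where
  "th_problem S s0 Acts Av F L Prop \<phi> err \<longleftrightarrow>
     finite S \<and> s0 \<in> S \<and> finite Acts \<and> finite Prop \<and> atoms \<phi> \<subseteq> Prop \<and>
     (\<forall>s\<in>S. Av s \<subseteq> Acts \<and> Av s \<noteq> {} \<and> L s \<subseteq> Prop) \<and>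
     (\<forall>s\<in>S. \<forall>a\<in>Av s. F s a \<in> S \<and> set_pmf (err s a) \<subseteq> Av s)"

text \<open>A finite path s0 a0 s1 ... a_{k-1} s_k is represented as the list
  [(s0,a0),...,(s_{k-1},a_{k-1})] together with the last state s_k.\<close>
definition strategy :: "'s set \<Rightarrow> ('s \<Rightarrow> 'a set) \<Rightarrow> (('s \<times> 'a) list \<Rightarrow> 's \<Rightarrow> 'a) \<Rightarrow> bool" where
  "strategy S Av \<sigma> \<longleftrightarrow> (\<forall>h s. s \<in> S \<longrightarrow> \<sigma> h s \<in> Av s)"

text \<open>Distribution over perturbed path prefixes of length n:
  list of triples (s_i, a_i, a_i') for i < n, and the current state s_n.\<close>
fun pert_dist ::
  "'s \<Rightarrow> ('s \<Rightarrow> 'a \<Rightarrow> 's) \<Rightarrow> ('s \<Rightarrow> 'a \<Rightarrow> 'a pmf) \<Rightarrow> (('s \<times> 'a) list \<Rightarrow> 's \<Rightarrow> 'a)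
   \<Rightarrow> nat \<Rightarrow> (('s \<times> 'a \<times> 'a) list \<times> 's) pmf" where
  "pert_dist s0 F err \<sigma> 0 = return_pmf ([], s0)"
| "pert_dist s0 F err \<sigma> (Suc n) =
     bind_pmf (pert_dist s0 F err \<sigma> n) (\<lambda>(h, s).
       let a = \<sigma> (map (\<lambda>(si, ai, ai'). (si, ai)) h) s in
       map_pmf (\<lambda>a'. (h @ [(s, a, a')], F s a')) (err s a))"

definition reach_sat :: "('s \<Rightarrow> 'p set) \<Rightarrow> 'p ltlf \<Rightarrow> 's list \<Rightarrow> bool" where
  "reach_sat L \<phi> ss \<longleftrightarrow> (\<exists>k < length ss. models (map L (take (Suc k) ss)) \<phi>)"

text \<open>Pr_D^{sigma,E}(phi): probability of the (increasing) union over n of the events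
  "some k \<le> n with L(s_0)..L(s_k) |= phi", i.e. the supremum (= limit) over n.\<close>
definition th_prob ::
  "'s \<Rightarrow> ('s \<Rightarrow> 'a \<Rightarrow> 's) \<Rightarrow> ('s \<Rightarrow> 'p set) \<Rightarrow> ('s \<Rightarrow> 'a \<Rightarrow> 'a pmf) \<Rightarrow> 'p ltlf
   \<Rightarrow> (('s \<times> 'a) list \<Rightarrow> 's \<Rightarrow> 'a) \<Rightarrow> real" where
  "th_prob s0 F L err \<phi> \<sigma> =
     (SUP n. measure_pmf.prob (pert_dist s0 F err \<sigma> n)
        {(h, s). reach_sat L \<phi> (map fst h @ [s])})"

definition th_optimal where
  "th_optimal S s0 Av F L err \<phi> \<sigma> \<longleftrightarrow> strategy S Av \<sigma> \<and>
     (\<forall>\<sigma>'. strategy S Av \<sigma>' \<longrightarrow> th_prob s0 F L err \<phi> \<sigma>' \<le> th_prob s0 F L err \<phi> \<sigma>)"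

fun mdp_dist ::
  "'s \<Rightarrow> ('s \<Rightarrow> 'a \<Rightarrow> 's pmf) \<Rightarrow> (('s \<times> 'a) list \<Rightarrow> 's \<Rightarrow> 'a)
   \<Rightarrow> nat \<Rightarrow> (('s \<times> 'a) list \<times> 's) pmf" where
  "mdp_dist s0 K \<sigma> 0 = return_pmf ([], s0)"
| "mdp_dist s0 K \<sigma> (Suc n) =
     bind_pmf (mdp_dist s0 K \<sigma> n) (\<lambda>(h, s).
       let a = \<sigma> h s in map_pmf (\<lambda>s'. (h @ [(s, a)], s')) (K s a))"

definition mdp_prob ::
  "'s \<Rightarrow> ('s \<Rightarrow> 'a \<Rightarrow> 's pmf) \<Rightarrow> ('s \<Rightarrow> 'p set) \<Rightarrow> 'p ltlf
   \<Rightarrow> (('s \<times> 'a) list \<Rightarrow> 's \<Rightarrow> 'a) \<Rightarrow> real" where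
  "mdp_prob s0 K L \<phi> \<sigma> =
     (SUP n. measure_pmf.prob (mdp_dist s0 K \<sigma> n)
        {(h, s). reach_sat L \<phi> (map fst h @ [s])})"

definition mdp_optimal where
  "mdp_optimal S s0 Av K L \<phi> \<sigma> \<longleftrightarrow> strategy S Av \<sigma> \<and>
     (\<forall>\<sigma>'. strategy S Av \<sigma>' \<longrightarrow> mdp_prob s0 K L \<phi> \<sigma>' \<le> mdp_prob s0 K L \<phi> \<sigma>)"

definition constructed_mdp ::
  "'s set \<Rightarrow> ('s \<Rightarrow> 'a set) \<Rightarrow> ('s \<Rightarrow> 'a \<Rightarrow> 's) \<Rightarrow> ('s \<Rightarrow> 'a \<Rightarrow> 'a pmf) \<Rightarrow> ('s \<Rightarrow> 'a \<Rightarrow> 's pmf) \<Rightarrow> bool" where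
  "constructed_mdp S Av F err K \<longleftrightarrow>
     (\<forall>s\<in>S. \<forall>a\<in>Av s. \<forall>s'. pmf (K s a) s' = (\<Sum>a'\<in>{a'\<in>Av s. F s a' = s'}. pmf (err s a) a'))"

end

theory Submission
  imports Defs
begin

text \<open>The kernel of the constructed MDP is the image of the error distribution under the
  deterministic transition: K s a is map_pmf (F s) (err s a). Hence, along every
  reachable history, the distribution of perturbed path prefixes, after forgetting the
  actually instructed actions, is exactly the distribution of MDP path prefixes under the
  same strategy. The objective only looks at the visited states, so the two success
  probabilities agree for every strategy, and therefore so do the optimal strategies.\<close>

definition intended_path :: "('s \<times> 'a \<times> 'a) list \<Rightarrow> ('s \<times> 'a) list" where
  "intended_path h = map (\<lambda>(s, a, a'). (s, a)) h"

lemma map_fst_intended_path [simp]: "map fst (intended_path h) = map fst h"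
  by (induction h) (auto simp: intended_path_def)

lemma pert_dist_state_in:
  assumes "s0 \<in> S"
    and closed: "\<And>s a. s \<in> S \<Longrightarrow> a \<in> Av s \<Longrightarrow> F s a \<in> S \<and> set_pmf (err s a) \<subseteq> Av s"
    and "strategy S Av \<sigma>"
    and "(h, s) \<in> set_pmf (pert_dist s0 F err \<sigma> n)"
  shows "s \<in> S"
  using assms(4)
proof (induction n arbitrary: h s)
  case 0
  then show ?case using \<open>s0 \<in> S\<close> by simp
next
  case (Suc n)
  then obtain h' s' a' where reach: "(h', s') \<in> set_pmf (pert_dist s0 F err \<sigma> n)"
    and err: "a' \<in> set_pmf (err s' (\<sigma> (intended_path h') s'))" and "s = F s' a'"
    by (auto simp: Let_def intended_path_def)
  have "s' \<in> S" using Suc.IH[OF reach] .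
  moreover have "\<sigma> (intended_path h') s' \<in> Av s'"
    using \<open>strategy S Av \<sigma>\<close> \<open>s' \<in> S\<close> by (simp add: strategy_def)
  ultimately show ?case using closed err \<open>s = F s' a'\<close> by blast
qed

lemma map_pmf_err_eq_constructed_kernel:
  assumes "finite (Av s)" and "set_pmf (err s a) \<subseteq> Av s"
    and K: "\<And>s'. pmf (K s a) s' = (\<Sum>a'\<in>{a'\<in>Av s. F s a' = s'}. pmf (err s a) a')"
  shows "map_pmf (F s) (err s a) = K s a"
proof (rule pmf_eqI)
  fix s'
  have "F s -` {s'} \<inter> set_pmf (err s a) = {a'\<in>Av s. F s a' = s'} \<inter> set_pmf (err s a)"
    using \<open>set_pmf (err s a) \<subseteq> Av s\<close> by auto
  then have "measure_pmf.prob (err s a) (F s -` {s'})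
      = measure_pmf.prob (err s a) {a'\<in>Av s. F s a' = s'}"
    by (metis measure_Int_set_pmf)
  then show "pmf (map_pmf (F s) (err s a)) s' = pmf (K s a) s'"
    using \<open>finite (Av s)\<close> by (simp add: pmf_map K measure_measure_pmf_finite)
qed

lemma map_pmf_pert_dist_eq_mdp_dist:
  assumes kernel: "\<And>n h s. (h, s) \<in> set_pmf (pert_dist s0 F err \<sigma> n) \<Longrightarrow>
      map_pmf (F s) (err s (\<sigma> (intended_path h) s)) = K s (\<sigma> (intended_path h) s)"
  shows "map_pmf (\<lambda>(h, s). (intended_path h, s)) (pert_dist s0 F err \<sigma> n) = mdp_dist s0 K \<sigma> n"
proof (induction n)
  case 0
  then show ?case by (simp add: intended_path_def)
next
  case (Suc n)
  let ?step = "\<lambda>(h, s). map_pmf (\<lambda>s'. (h @ [(s, \<sigma> h s)], s')) (K s (\<sigma> h s))"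
  have step: "map_pmf (\<lambda>(h, s). (intended_path h, s))
        (let a = \<sigma> (map (\<lambda>(s, a, a'). (s, a)) h) s
         in map_pmf (\<lambda>a'. (h @ [(s, a, a')], F s a')) (err s a))
      = ?step (intended_path h, s)"
    if "(h, s) \<in> set_pmf (pert_dist s0 F err \<sigma> n)" for h s
    using kernel[OF that, symmetric] by (simp add: pmf.map_comp o_def intended_path_def Let_def)
  have "map_pmf (\<lambda>(h, s). (intended_path h, s)) (pert_dist s0 F err \<sigma> (Suc n))
      = bind_pmf (pert_dist s0 F err \<sigma> n) (\<lambda>(h, s). ?step (intended_path h, s))"
    unfolding pert_dist.simps map_bind_pmf
    by (rule bind_pmf_cong[OF refl]) (auto simp only: step split: prod.split)
  also have "\<dots> = bind_pmf (map_pmf (\<lambda>(h, s). (intended_path h, s)) (pert_dist s0 F err \<sigma> n)) ?step"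
    by (simp add: bind_map_pmf case_prod_beta')
  also have "\<dots> = mdp_dist s0 K \<sigma> (Suc n)"
    using Suc.IH by (simp add: Let_def)
  finally show ?case .
qed

lemma mdp_prob_eq_th_prob:
  assumes "\<And>n h s. (h, s) \<in> set_pmf (pert_dist s0 F err \<sigma> n) \<Longrightarrow>
      map_pmf (F s) (err s (\<sigma> (intended_path h) s)) = K s (\<sigma> (intended_path h) s)"
  shows "mdp_prob s0 K L \<phi> \<sigma> = th_prob s0 F L err \<phi> \<sigma>"
proof -
  let ?sat = "{(h, s). reach_sat L \<phi> (map fst h @ [s])}"
  have dist: "map_pmf (\<lambda>(h, s). (intended_path h, s)) (pert_dist s0 F err \<sigma> n) = mdp_dist s0 K \<sigma> n"
    for n by (rule map_pmf_pert_dist_eq_mdp_dist) (rule assms)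
  have preimage: "(\<lambda>(h, s). (intended_path h, s)) -` ?sat = ?sat"
    by auto
  have "measure_pmf.prob (mdp_dist s0 K \<sigma> n) ?sat
      = measure_pmf.prob (pert_dist s0 F err \<sigma> n) ?sat" for n
    by (simp only: flip: dist add: measure_map_pmf preimage)
  then show ?thesis
    unfolding mdp_prob_def th_prob_def by simp
qed

lemma constructed_mdp_prob_eq_th_prob:
  assumes th: "th_problem S s0 Acts Av F L Prop \<phi> err"
    and K: "constructed_mdp S Av F err K"
    and \<sigma>: "strategy S Av \<sigma>"
  shows "mdp_prob s0 K L \<phi> \<sigma> = th_prob s0 F L err \<phi> \<sigma>"
proof (rule mdp_prob_eq_th_prob)
  fix n h s
  let ?a = "\<sigma> (intended_path h) s"
  from th have "s0 \<in> S" and "finite Acts" and Av_sub: "\<And>s. s \<in> S \<Longrightarrow> Av s \<subseteq> Acts"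
    and closed: "\<And>s a. s \<in> S \<Longrightarrow> a \<in> Av s \<Longrightarrow> F s a \<in> S \<and> set_pmf (err s a) \<subseteq> Av s"
    unfolding th_problem_def by blast+
  assume "(h, s) \<in> set_pmf (pert_dist s0 F err \<sigma> n)"
  with \<open>s0 \<in> S\<close> closed \<sigma> have "s \<in> S"
    by (rule pert_dist_state_in)
  with \<sigma> have "?a \<in> Av s"
    by (simp add: strategy_def)
  show "map_pmf (F s) (err s ?a) = K s ?a"
  proof (rule map_pmf_err_eq_constructed_kernel)
    show "finite (Av s)"
      using Av_sub[OF \<open>s \<in> S\<close>] \<open>finite Acts\<close> by (rule finite_subset)
    show "set_pmf (err s ?a) \<subseteq> Av s"
      using closed[OF \<open>s \<in> S\<close> \<open>?a \<in> Av s\<close>] ..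
    show "pmf (K s ?a) s' = (\<Sum>a'\<in>{a' \<in> Av s. F s a' = s'}. pmf (err s ?a) a')" for s'
      using K \<open>s \<in> S\<close> \<open>?a \<in> Av s\<close> unfolding constructed_mdp_def by blast
  qed
qed

theorem theorem1:
  fixes S :: "'s set" and s0 :: 's and Acts :: "'a set" and Av :: "'s \<Rightarrow> 'a set"
    and F :: "'s \<Rightarrow> 'a \<Rightarrow> 's" and L :: "'s \<Rightarrow> 'p set" and Prop :: "'p set"
    and \<phi> :: "'p ltlf" and err :: "'s \<Rightarrow> 'a \<Rightarrow> 'a pmf" and K :: "'s \<Rightarrow> 'a \<Rightarrow> 's pmf"
    and \<sigma> :: "('s \<times> 'a) list \<Rightarrow> 's \<Rightarrow> 'a"
  assumes "th_problem S s0 Acts Av F L Prop \<phi> err"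
    and "constructed_mdp S Av F err K"
  shows "mdp_optimal S s0 Av K L \<phi> \<sigma> \<longleftrightarrow> th_optimal S s0 Av F L err \<phi> \<sigma>"
proof -
  have "mdp_prob s0 K L \<phi> \<sigma>' = th_prob s0 F L err \<phi> \<sigma>'" if "strategy S Av \<sigma>'" for \<sigma>'
    using constructed_mdp_prob_eq_th_prob[OF assms that] .
  then show ?thesis
    unfolding mdp_optimal_def th_optimal_def by (metis (no_types, lifting))
qed

end
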